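(* Let $A$ be a finite-dimensional Leibniz algebra over a field which is not nilpotent but all of whose proper subalgebras are nilpotent. Then $\dim(A/A^2)\le 1$.
   Context: A (left) Leibniz algebra is an algebra satisfying $x(yz)=(xy)z+y(xz)$ for all $x,y,z$. $A^2=AA$; nilpotent means $A^t=0$ for some $t$, where $A^1=A$, $A^{j+1}=AA^j$. *)

theory Defs
  imports Complex_Main
begin

text \<open>An algebra over a field 'k is modelled as the whole carrier type 'v, which is a
  'k-vector space via scale, together with a product m :: 'v \<Rightarrow> 'v \<Rightarrow> 'v.\<close>

definition bilinear_prod :: "('k::field \<Rightarrow> 'v::ab_group_add \<Rightarrow> 'v) \<Rightarrow> ('v \<Rightarrow> 'v \<Rightarrow> 'v) \<Rightarrow> bool" where
  "bilinear_prod scale m \<longleftrightarrow>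
     (\<forall>x y z. m (x + y) z = m x z + m y z) \<and>
     (\<forall>x y z. m x (y + z) = m x y + m x z) \<and>
     (\<forall>a x y. m (scale a x) y = scale a (m x y)) \<and>
     (\<forall>a x y. m x (scale a y) = scale a (m x y))"

definition leibniz_identity :: "('v::ab_group_add \<Rightarrow> 'v \<Rightarrow> 'v) \<Rightarrow> bool" where
  "leibniz_identity m \<longleftrightarrow> (\<forall>x y z. m x (m y z) = m (m x y) z + m y (m x z))"

definition leibniz_algebra :: "('k::field \<Rightarrow> 'v::ab_group_add \<Rightarrow> 'v) \<Rightarrow> ('v \<Rightarrow> 'v \<Rightarrow> 'v) \<Rightarrow> bool" where
  "leibniz_algebra scale m \<longleftrightarrow> vector_space scale \<and> bilinear_prod scale m \<and> leibniz_identity m"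

definition fin_dim :: "('k::field \<Rightarrow> 'v::ab_group_add \<Rightarrow> 'v) \<Rightarrow> bool" where
  "fin_dim scale \<longleftrightarrow> (\<exists>B. finite B \<and> module.span scale B = UNIV)"

definition set_prod :: "('k::field \<Rightarrow> 'v::ab_group_add \<Rightarrow> 'v) \<Rightarrow> ('v \<Rightarrow> 'v \<Rightarrow> 'v) \<Rightarrow> 'v set \<Rightarrow> 'v set \<Rightarrow> 'v set" where
  "set_prod scale m U V = module.span scale {m u v | u v. u \<in> U \<and> v \<in> V}"

text \<open>Powers S^1 = S, S^(j+1) = S S^j (S^0 is set to S as a harmless convention).\<close>
fun lpow :: "('k::field \<Rightarrow> 'v::ab_group_add \<Rightarrow> 'v) \<Rightarrow> ('v \<Rightarrow> 'v \<Rightarrow> 'v) \<Rightarrow> 'v set \<Rightarrow> nat \<Rightarrow> 'v set" where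
  "lpow scale m S 0 = S"
| "lpow scale m S (Suc 0) = S"
| "lpow scale m S (Suc (Suc j)) = set_prod scale m S (lpow scale m S (Suc j))"

definition nilpotent_alg :: "('k::field \<Rightarrow> 'v::ab_group_add \<Rightarrow> 'v) \<Rightarrow> ('v \<Rightarrow> 'v \<Rightarrow> 'v) \<Rightarrow> 'v set \<Rightarrow> bool" where
  "nilpotent_alg scale m S \<longleftrightarrow> (\<exists>t. lpow scale m S t = {0})"

definition subalgebra :: "('k::field \<Rightarrow> 'v::ab_group_add \<Rightarrow> 'v) \<Rightarrow> ('v \<Rightarrow> 'v \<Rightarrow> 'v) \<Rightarrow> 'v set \<Rightarrow> bool" where
  "subalgebra scale m S \<longleftrightarrow> module.subspace scale S \<and> (\<forall>x\<in>S. \<forall>y\<in>S. m x y \<in> S)"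

end

theory Submission
  imports Defs
begin

text \<open>If \<open>dim (A/A\<^sup>2) \<ge> 2\<close>, a basis of \<open>A\<^sup>2\<close> extends to a basis of \<open>A\<close> with two extra vectors
  \<open>a \<noteq> b\<close>; omitting \<open>a\<close> resp. \<open>b\<close> spans two proper subspaces \<open>S\<^sub>1, S\<^sub>2 \<supseteq> A\<^sup>2\<close> with
  \<open>S\<^sub>1 + S\<^sub>2 = A\<close>. Containing \<open>A\<^sup>2\<close>, they are subalgebras, hence nilpotent. Writing \<open>W\<^sub>S(k)\<close> for the
  span of the left-normed words \<open>s\<^sub>1(s\<^sub>2(\<dots>(s\<^sub>k w)))\<close> with \<open>s\<^sub>i \<in> S\<close>, the Leibniz identity makes
  \<open>W\<^sub>S(k)\<close> stable under left multiplication whenever \<open>A\<^sup>2 \<subseteq> S\<close>. Expanding each letter of a word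
  of length \<open>k\<^sub>1 + k\<^sub>2\<close> along \<open>A = S\<^sub>1 + S\<^sub>2\<close> then puts it into \<open>W\<^sub>S\<^sub>1(k\<^sub>1) + W\<^sub>S\<^sub>2(k\<^sub>2)\<close>, which
  vanishes for large \<open>k\<^sub>i\<close>; so \<open>A\<close> would be nilpotent.\<close>

lemma (in vector_space) split_by_two_proper_subspaces:
  assumes "finite T" "span T = UNIV" "dim P + 2 \<le> dim (UNIV :: 'b set)"
  obtains S1 S2 where "subspace S1" "subspace S2" "P \<subseteq> S1" "P \<subseteq> S2"
    "S1 \<noteq> UNIV" "S2 \<noteq> UNIV" "\<And>x. \<exists>y\<in>S1. \<exists>z\<in>S2. x = y + z"
proof -
  obtain BP where BP: "BP \<subseteq> P" "independent BP" "P \<subseteq> span BP" "card BP = dim P"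
    using basis_exists by blast
  define B where "B = extend_basis BP"
  have BPB: "BP \<subseteq> B" and iB: "independent B" and sB: "span B = UNIV"
    using BP(2) by (auto simp: B_def extend_basis_superset independent_extend_basis)
  have fB: "finite B"
    using independent_span_bound[OF assms(1) iB] assms(2) by auto
  have "card B = dim (UNIV :: 'b set)"
    using dim_eq_card[of B UNIV] sB iB by simp
  then have "card (B - BP) \<ge> 2"
    using assms(3) BP(4) BPB fB finite_subset[OF BPB fB] by (simp add: card_Diff_subset)
  then obtain a b where ab: "a \<in> B - BP" "b \<in> B - BP" "a \<noteq> b"
    using card_le_Suc0_iff_eq[of "B - BP"] fB by (metis finite_Diff not_less_eq_eq numeral_2_eq_2)
  have proper: "span (B - {c}) \<noteq> UNIV" if "c \<in> B" for c
    using iB that unfolding dependent_def by blast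
  have above: "P \<subseteq> span (B - {c})" if "c \<notin> BP" for c
    using BP(3) span_mono[of BP "B - {c}"] BPB that by blast
  have "(B - {a}) \<union> (B - {b}) = B"
    using ab by auto
  then have "x \<in> span ((B - {a}) \<union> (B - {b}))" for x
    using sB by simp
  then have "\<exists>y\<in>span (B - {a}). \<exists>z\<in>span (B - {b}). x = y + z" for x
    unfolding span_Un by blast
  then show ?thesis
    using that[of "span (B - {a})" "span (B - {b})"] ab proper above by auto
qed

locale left_leibniz = vector_space scale for scale :: "'k::field \<Rightarrow> 'v::ab_group_add \<Rightarrow> 'v" +
  fixes m :: "'v \<Rightarrow> 'v \<Rightarrow> 'v"
  assumes mult_add_left: "m (x + y) z = m x z + m y z"
    and mult_add_right: "m x (y + z) = m x y + m x z"
    and mult_scale_right: "m x (scale a y) = scale a (m x y)"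
    and leibniz: "m x (m y z) = m (m x y) z + m y (m x z)"
begin

lemma mult_zero_right: "m x 0 = 0"
  using mult_add_right[of x 0 0] by simp

lemma mult_left_in_span:
  assumes "u \<in> span X" "\<And>w. w \<in> X \<Longrightarrow> m x w \<in> span Y"
  shows "m x u \<in> span Y"
  using assms(1)
proof (induction rule: span_induct_alt)
  case base
  then show ?case by (simp add: mult_zero_right span_zero)
next
  case (step c w y)
  then show ?case
    using assms(2)[of w] by (simp add: mult_add_right mult_scale_right span_add span_scale)
qed

definition words :: "'v set \<Rightarrow> nat \<Rightarrow> 'v set" where
  "words S k = {foldr m ys w | ys w. set ys \<subseteq> S \<and> length ys = k}"

definition word_span :: "'v set \<Rightarrow> nat \<Rightarrow> 'v set" where
  "word_span S k = span (words S k)"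

lemma word_in_word_span: "set ys \<subseteq> S \<Longrightarrow> foldr m ys w \<in> word_span S (length ys)"
  unfolding word_span_def words_def by (rule span_base) blast

lemma word_span_0: "word_span S 0 = UNIV"
  using word_in_word_span[of "[]" S] by auto

lemma mult_in_word_span_Suc:
  assumes "s \<in> S" "u \<in> word_span S k"
  shows "m s u \<in> word_span S (Suc k)"
  unfolding word_span_def
proof (rule mult_left_in_span[of u "words S k"])
  show "u \<in> span (words S k)"
    using assms(2) by (simp add: word_span_def)
  fix w assume "w \<in> words S k"
  then obtain ys v where "w = foldr m ys v" "set ys \<subseteq> S" "length ys = k"
    by (auto simp: words_def)
  then show "m s w \<in> span (words S (Suc k))"
    using assms(1) word_in_word_span[of "s # ys" S v] by (simp add: word_span_def)
qed

text \<open>The Leibniz identity moves \<open>x\<close> past the first letter \<open>s\<close>, leaving the word with first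
  letter \<open>x s \<in> S\<close> plus \<open>s (x w')\<close>, which is handled by induction.\<close>

lemma mult_word_in_word_span:
  assumes products: "\<And>x y. m x y \<in> S" and "set ys \<subseteq> S"
  shows "m x (foldr m ys w) \<in> word_span S (length ys)"
  using assms(2)
proof (induction ys)
  case Nil
  then show ?case by (simp add: word_span_0)
next
  case (Cons s ys)
  have "m x (foldr m (s # ys) w) = foldr m (m x s # ys) w + m s (m x (foldr m ys w))"
    using leibniz[of x s "foldr m ys w"] by simp
  moreover have "foldr m (m x s # ys) w \<in> word_span S (length (s # ys))"
    using word_in_word_span[of "m x s # ys" S w] Cons.prems products by simp
  moreover have "m s (m x (foldr m ys w)) \<in> word_span S (length (s # ys))"
    using mult_in_word_span_Suc Cons by simp
  ultimately show ?case by (simp add: word_span_def span_add)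
qed

lemma mult_in_word_span:
  assumes products: "\<And>x y. m x y \<in> S" and "u \<in> word_span S k"
  shows "m x u \<in> word_span S k"
proof -
  have "m x u \<in> span (word_span S k)"
    using assms(2) mult_word_in_word_span[OF products]
    by (intro mult_left_in_span[of u "words S k"]) (auto simp: word_span_def words_def intro: span_base)
  then show ?thesis by (simp add: word_span_def span_span)
qed

lemma word_in_sum_of_word_spans:
  assumes products1: "\<And>x y. m x y \<in> S1" and products2: "\<And>x y. m x y \<in> S2"
    and sum: "\<And>x. \<exists>y\<in>S1. \<exists>z\<in>S2. x = y + z"
    and "k1 + k2 \<le> length xs"
  shows "foldr m xs v \<in> span (word_span S1 k1 \<union> word_span S2 k2)"
  using assms(4)
proof (induction xs arbitrary: k1 k2)
  case Nil
  then show ?case by (auto intro: span_base simp: word_span_0)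
next
  case (Cons x xs)
  let ?w = "foldr m xs v"
  let ?Z = "span (word_span S1 k1 \<union> word_span S2 k2)"
  obtain y z where yz: "y \<in> S1" "z \<in> S2" "x = y + z"
    using sum by blast
  have "m y ?w \<in> ?Z"
  proof (cases k1)
    case 0
    then show ?thesis by (auto intro: span_base simp: word_span_0)
  next
    case (Suc j)
    have "?w \<in> span (word_span S1 j \<union> word_span S2 k2)"
      using Cons.IH Cons.prems Suc by simp
    then show ?thesis
    proof (rule mult_left_in_span)
      fix u assume "u \<in> word_span S1 j \<union> word_span S2 k2"
      then show "m y u \<in> ?Z"
        using mult_in_word_span_Suc[OF yz(1)] mult_in_word_span[OF products2] Suc by (auto intro: span_base)
    qed
  qed
  moreover have "m z ?w \<in> ?Z"
  proof (cases k2)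
    case 0
    then show ?thesis by (auto intro: span_base simp: word_span_0)
  next
    case (Suc j)
    have "?w \<in> span (word_span S1 k1 \<union> word_span S2 j)"
      using Cons.IH Cons.prems Suc by simp
    then show ?thesis
    proof (rule mult_left_in_span)
      fix u assume "u \<in> word_span S1 k1 \<union> word_span S2 j"
      then show "m z u \<in> ?Z"
        using mult_in_word_span_Suc[OF yz(2)] mult_in_word_span[OF products1] Suc by (auto intro: span_base)
    qed
  qed
  ultimately show ?case
    using yz(3) by (simp add: mult_add_left span_add)
qed

lemma lpow_UNIV_subset_word_span: "lpow scale m UNIV (Suc n) \<subseteq> word_span UNIV n"
proof (induction n)
  case 0
  then show ?case by (simp add: word_span_0)
next
  case (Suc n)
  have "m x u \<in> word_span UNIV (Suc n)" if "u \<in> lpow scale m UNIV (Suc n)" for x u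
    using mult_in_word_span_Suc[of x UNIV u n] Suc that by auto
  then have "span {m x u | x u. x \<in> UNIV \<and> u \<in> lpow scale m UNIV (Suc n)} \<subseteq> word_span UNIV (Suc n)"
    by (intro span_minimal) (auto simp: word_span_def)
  then show ?case
    by (simp add: set_prod_def)
qed

lemma word_in_lpow:
  "set ys \<subseteq> S \<Longrightarrow> u \<in> S \<Longrightarrow> foldr m ys u \<in> lpow scale m S (Suc (length ys))"
proof (induction ys)
  case Nil
  then show ?case by simp
next
  case (Cons s ys)
  then show ?case
    by (simp add: set_prod_def) (rule span_base, blast)
qed

lemma nilpotent_imp_word_span_zero:
  assumes products: "\<And>x y. m x y \<in> S" and "nilpotent_alg scale m S"
  obtains K where "word_span S K = {0}"
proof -
  obtain t where t: "lpow scale m S t = {0}"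
    using assms(2) unfolding nilpotent_alg_def by blast
  define N where "N = t - 1"
  have N: "lpow scale m S (Suc N) = {0}"
    using t by (cases t) (simp_all add: N_def)
  have "foldr m ys w = 0" if ys: "set ys \<subseteq> S" "length ys = Suc N" for ys w
  proof -
    obtain ys0 s where ys_eq: "ys = ys0 @ [s]"
      using ys by (cases ys rule: rev_cases) auto
    have "foldr m ys w = foldr m ys0 (m s w)"
      using ys_eq by simp
    also have "\<dots> \<in> lpow scale m S (Suc N)"
      using word_in_lpow[of ys0 S "m s w"] ys ys_eq products by simp
    finally show ?thesis using N by simp
  qed
  then have "words S (Suc N) \<subseteq> {0}"
    by (auto simp: words_def)
  then have "word_span S (Suc N) \<subseteq> {0}"
    unfolding word_span_def by (rule span_minimal) simp
  then show ?thesis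
    using that[of "Suc N"] span_zero by (auto simp: word_span_def)
qed

lemma nilpotent_if_sum_of_nilpotent:
  assumes products1: "\<And>x y. m x y \<in> S1" and products2: "\<And>x y. m x y \<in> S2"
    and "nilpotent_alg scale m S1" "nilpotent_alg scale m S2"
    and sum: "\<And>x. \<exists>y\<in>S1. \<exists>z\<in>S2. x = y + z"
  shows "nilpotent_alg scale m UNIV"
proof -
  obtain K1 where K1: "word_span S1 K1 = {0}"
    using nilpotent_imp_word_span_zero[OF products1 assms(3)] .
  obtain K2 where K2: "word_span S2 K2 = {0}"
    using nilpotent_imp_word_span_zero[OF products2 assms(4)] .
  have "words UNIV (K1 + K2) \<subseteq> {0}"
    using word_in_sum_of_word_spans[OF products1 products2 sum, of K1 K2] K1 K2
    by (auto simp: words_def)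
  then have "word_span UNIV (K1 + K2) \<subseteq> {0}"
    unfolding word_span_def by (rule span_minimal) simp
  moreover have "0 \<in> lpow scale m UNIV (Suc (K1 + K2))"
    by (cases "K1 + K2") (auto simp: set_prod_def span_zero)
  ultimately have "lpow scale m UNIV (Suc (K1 + K2)) = {0}"
    using lpow_UNIV_subset_word_span by blast
  then show ?thesis
    unfolding nilpotent_alg_def by blast
qed

end

lemma leibniz_algebra_imp_left_leibniz:
  "leibniz_algebra scale m \<Longrightarrow> left_leibniz scale m"
  unfolding leibniz_algebra_def bilinear_prod_def leibniz_identity_def
  by (intro left_leibniz.intro left_leibniz_axioms.intro) blast+

theorem mainTheorem6:
  fixes scale :: "'k::field \<Rightarrow> 'v::ab_group_add \<Rightarrow> 'v"
    and m :: "'v \<Rightarrow> 'v \<Rightarrow> 'v"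
  assumes "leibniz_algebra scale m"
    and "fin_dim scale"
    and "\<not> nilpotent_alg scale m UNIV"
    and "\<forall>S. subalgebra scale m S \<and> S \<noteq> UNIV \<longrightarrow> nilpotent_alg scale m S"
  shows "vector_space.dim scale (UNIV :: 'v set)
           \<le> vector_space.dim scale (set_prod scale m UNIV UNIV) + 1"
proof (rule ccontr)
  interpret left_leibniz scale m
    using assms(1) by (rule leibniz_algebra_imp_left_leibniz)
  let ?P = "set_prod scale m UNIV UNIV"
  obtain T where T: "finite T" "span T = UNIV"
    using assms(2) unfolding fin_dim_def by blast
  assume "\<not> ?thesis"
  then have "dim ?P + 2 \<le> dim (UNIV :: 'v set)"
    by simp
  then obtain S1 S2 where S: "subspace S1" "subspace S2" "?P \<subseteq> S1" "?P \<subseteq> S2"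
    "S1 \<noteq> UNIV" "S2 \<noteq> UNIV" "\<And>x. \<exists>y\<in>S1. \<exists>z\<in>S2. x = y + z"
    using split_by_two_proper_subspaces[OF T] by blast
  have "m x y \<in> ?P" for x y
    unfolding set_prod_def by (rule span_base) blast
  then have products: "m x y \<in> S1" "m x y \<in> S2" for x y
    using S by blast+
  then have "subalgebra scale m S1" "subalgebra scale m S2"
    using S(1,2) by (simp_all add: subalgebra_def)
  then have "nilpotent_alg scale m S1" "nilpotent_alg scale m S2"
    using assms(4) S(5,6) by blast+
  then show False
    using nilpotent_if_sum_of_nilpotent[OF products(1,2) _ _ S(7)] assms(3) by blast
qed

end
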